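(* Let $\mathcal{X}=\{\boldsymbol{x}_1,\dots,\boldsymbol{x}_N\}\subseteq\mathbb{R}^D$ with $\|\boldsymbol{x}_j\|_2=1$ for all $j$, and let $\lambda\in(1,\infty)$. For each $j\in\{1,\dots,N\}$: (i) for every $\mathcal{X}_0\subseteq\mathcal{X}$, $f_\lambda(\boldsymbol{x}_j,\mathcal{X}_0)\in[1-\frac{1}{2\lambda},\frac{\lambda}{2}]$; (ii) $f_\lambda(\boldsymbol{x}_j,\emptyset)=\lambda/2$; (iii) for $\mathcal{X}_0\subseteq\mathcal{X}$, $f_\lambda(\boldsymbol{x}_j,\mathcal{X}_0)=1-\frac{1}{2\lambda}$ if and only if at least one of $\boldsymbol{x}_j$ or $-\boldsymbol{x}_j$ belongs to $\mathcal{X}_0$.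
   Context: For $\mathcal{X}_0\subseteq\mathcal{X}$ nonempty and $\boldsymbol{x}_j\in\mathcal{X}$, define $f_\lambda(\boldsymbol{x}_j,\mathcal{X}_0):=\min_{\boldsymbol{c}\in\mathbb{R}^N}\|\boldsymbol{c}\|_1+\frac{\lambda}{2}\|\boldsymbol{x}_j-\sum_{i:\boldsymbol{x}_i\in\mathcal{X}_0}c_i\boldsymbol{x}_i\|_2^2$, and by convention $f_\lambda(\boldsymbol{x}_j,\emptyset):=\lambda/2$. *)

theory Defs
  imports "HOL-Analysis.Analysis"
begin

text \<open>The data set is indexed by i < N (0-based): x :: nat => 'a, with 'a a Euclidean space (R^D).
  Coefficient vectors c in R^N are functions nat => real, only c i for i < N matter.
  f_lambda(x_j, X0) = min over c of ||c||_1 + lam/2 * ||x_j - sum_{i : x_i in X0} c_i x_i||^2,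
  written as an infimum (the minimum is attained); f_lambda(x_j, {}) = lam/2 by convention.\<close>

definition f_lam :: "real \<Rightarrow> nat \<Rightarrow> (nat \<Rightarrow> 'a::euclidean_space) \<Rightarrow> 'a \<Rightarrow> 'a set \<Rightarrow> real" where
  "f_lam lam N x xj X0 =
     (if X0 = {} then lam / 2
      else Inf {(\<Sum>i<N. \<bar>c i\<bar>) + lam / 2 * (norm (xj - (\<Sum>i\<in>{i. i < N \<and> x i \<in> X0}. c i *\<^sub>R x i)))\<^sup>2
                | c :: nat \<Rightarrow> real. True})"

end

theory Submission
  imports Defs
begin

text \<open>Write \<open>S = \<Sum> c\<^sub>i x\<^sub>i\<close> for the combination of the atoms in \<open>X\<^sub>0\<close>, \<open>t = \<parallel>c\<parallel>\<^sub>1\<close> and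
  \<open>a = \<langle>S, x\<^sub>j\<rangle>\<close>. Since all atoms are unit vectors, \<open>\<bar>a\<bar> \<le> t\<close> and
  \<open>\<parallel>x\<^sub>j - S\<parallel>\<^sup>2 \<ge> (1 - a)\<^sup>2\<close>, and completing the square gives
  \<open>a + \<lambda>/2 (1 - a)\<^sup>2 = 1 - 1/(2\<lambda>) + \<lambda>/2 (1 - 1/\<lambda> - a)\<^sup>2\<close>, so the objective is at least
  \<open>1 - 1/(2\<lambda>)\<close>. The bound is attained by \<open>c = \<plusminus>(1 - 1/\<lambda>) e\<^sub>k\<close> when \<open>\<plusminus>x\<^sub>j = x\<^sub>k \<in> X\<^sub>0\<close>.
  Otherwise every atom of \<open>X\<^sub>0\<close> has \<open>\<bar>\<langle>x\<^sub>i, x\<^sub>j\<rangle>\<bar> \<le> 1 - d\<close> for some \<open>d > 0\<close>, which adds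
  \<open>d \<bar>a\<bar>\<close> to the bound; together with the square term this keeps the objective
  uniformly away from \<open>1 - 1/(2\<lambda>)\<close>.\<close>

definition atom_comb :: "nat \<Rightarrow> (nat \<Rightarrow> 'a::real_vector) \<Rightarrow> 'a set \<Rightarrow> (nat \<Rightarrow> real) \<Rightarrow> 'a" where
  "atom_comb N x X0 c = (\<Sum>i\<in>{i. i < N \<and> x i \<in> X0}. c i *\<^sub>R x i)"

definition sparse_cost ::
    "real \<Rightarrow> nat \<Rightarrow> (nat \<Rightarrow> 'a::euclidean_space) \<Rightarrow> 'a \<Rightarrow> 'a set \<Rightarrow> (nat \<Rightarrow> real) \<Rightarrow> real" where
  "sparse_cost lam N x xj X0 c = (\<Sum>i<N. \<bar>c i\<bar>) + lam / 2 * (norm (xj - atom_comb N x X0 c))\<^sup>2"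

lemma f_lam_eq_INF_sparse_cost:
  assumes "X0 \<noteq> {}"
  shows "f_lam lam N x xj X0 = (INF c. sparse_cost lam N x xj X0 c)"
  using assms by (simp add: f_lam_def sparse_cost_def atom_comb_def image_def)

lemma abs_inner_sum_scaleR_le:
  fixes x :: "'i \<Rightarrow> 'a::real_inner"
  assumes "\<forall>i\<in>I. \<bar>x i \<bullet> y\<bar> \<le> r"
  shows "\<bar>(\<Sum>i\<in>I. c i *\<^sub>R x i) \<bullet> y\<bar> \<le> r * (\<Sum>i\<in>I. \<bar>c i\<bar>)"
proof -
  have "\<bar>(\<Sum>i\<in>I. c i *\<^sub>R x i) \<bullet> y\<bar> = \<bar>\<Sum>i\<in>I. c i * (x i \<bullet> y)\<bar>"
    by (simp add: inner_sum_left)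
  also have "\<dots> \<le> (\<Sum>i\<in>I. \<bar>c i\<bar> * \<bar>x i \<bullet> y\<bar>)"
    by (metis (no_types, lifting) abs_mult sum_abs sum.cong)
  also have "\<dots> \<le> (\<Sum>i\<in>I. \<bar>c i\<bar> * r)"
    using assms by (intro sum_mono mult_left_mono) auto
  finally show ?thesis
    by (simp add: sum_distrib_left mult.commute)
qed

lemma abs_inner_atom_comb_le:
  assumes "\<forall>i<N. x i \<in> X0 \<longrightarrow> \<bar>x i \<bullet> y\<bar> \<le> r" "r \<ge> 0"
  shows "\<bar>atom_comb N x X0 c \<bullet> y\<bar> \<le> r * (\<Sum>i<N. \<bar>c i\<bar>)"
proof -
  have "\<bar>atom_comb N x X0 c \<bullet> y\<bar> \<le> r * (\<Sum>i\<in>{i. i < N \<and> x i \<in> X0}. \<bar>c i\<bar>)"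
    unfolding atom_comb_def using assms(1) by (intro abs_inner_sum_scaleR_le) auto
  also have "\<dots> \<le> r * (\<Sum>i<N. \<bar>c i\<bar>)"
    using assms(2) by (intro mult_left_mono sum_mono2) auto
  finally show ?thesis .
qed

lemma one_minus_inner_square_le_norm_diff_square:
  fixes y s :: "'a::real_inner"
  assumes "norm y = 1"
  shows "(1 - s \<bullet> y)\<^sup>2 \<le> (norm (y - s))\<^sup>2"
proof -
  have "1 - s \<bullet> y = y \<bullet> (y - s)"
    using assms by (simp add: inner_diff_right inner_commute dot_square_norm)
  also have "\<bar>\<dots>\<bar> \<le> norm (y - s)"
    using Cauchy_Schwarz_ineq2[of y "y - s"] assms by simp
  finally show ?thesis
    by (metis abs_ge_zero power2_abs power_mono)
qed

lemma unit_vectors_abs_inner_eq_1: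
  fixes u v :: "'a::real_inner"
  assumes "norm u = 1" "norm v = 1" "\<bar>u \<bullet> v\<bar> = 1"
  shows "u = v \<or> u = - v"
  using norm_cauchy_schwarz_abs_eq[of u v] assms by auto

lemma sparse_cost_lower_bound:
  fixes x :: "nat \<Rightarrow> 'a::euclidean_space"
  assumes xj: "norm xj = 1" and lam: "lam > 0" and d: "0 \<le> d" "d \<le> 1"
    and atoms: "\<forall>i<N. x i \<in> X0 \<longrightarrow> \<bar>x i \<bullet> xj\<bar> \<le> 1 - d"
  shows "sparse_cost lam N x xj X0 c \<ge> 1 - 1 / (2 * lam)
           + lam / 2 * (1 - 1 / lam - atom_comb N x X0 c \<bullet> xj)\<^sup>2
           + d * \<bar>atom_comb N x X0 c \<bullet> xj\<bar>"
proof -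
  define a where "a = atom_comb N x X0 c \<bullet> xj"
  define t where "t = (\<Sum>i<N. \<bar>c i\<bar>)"
  have t: "t \<ge> 0"
    unfolding t_def by (simp add: sum_nonneg)
  have "\<bar>a\<bar> \<le> (1 - d) * t"
    unfolding a_def t_def using atoms d by (intro abs_inner_atom_comb_le) auto
  moreover have "(1 - d) * t \<le> t"
    using d t by (simp add: mult_left_le_one_le)
  ultimately have "d * \<bar>a\<bar> \<le> d * t"
    using d by (simp add: mult_left_mono)
  with \<open>\<bar>a\<bar> \<le> (1 - d) * t\<close> have "\<bar>a\<bar> + d * \<bar>a\<bar> \<le> t"
    by (simp add: algebra_simps)
  moreover have "lam / 2 * (norm (xj - atom_comb N x X0 c))\<^sup>2 \<ge> lam / 2 * (1 - a)\<^sup>2"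
    unfolding a_def using lam one_minus_inner_square_le_norm_diff_square[OF xj] by simp
  moreover have "a + lam / 2 * (1 - a)\<^sup>2 = 1 - 1 / (2 * lam) + lam / 2 * (1 - 1 / lam - a)\<^sup>2"
    using lam by (simp add: field_simps power2_eq_square)
  ultimately show ?thesis
    unfolding sparse_cost_def a_def t_def by linarith
qed

lemma sparse_cost_ge:
  fixes x :: "nat \<Rightarrow> 'a::euclidean_space"
  assumes unit: "\<forall>i<N. norm (x i) = 1" and xj: "norm xj = 1" and lam: "lam > 0"
  shows "sparse_cost lam N x xj X0 c \<ge> 1 - 1 / (2 * lam)"
proof -
  have "\<forall>i<N. x i \<in> X0 \<longrightarrow> \<bar>x i \<bullet> xj\<bar> \<le> 1 - 0"
    using unit xj by (auto intro!: order_trans[OF Cauchy_Schwarz_ineq2])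
  moreover have "lam / 2 * (1 - 1 / lam - atom_comb N x X0 c \<bullet> xj)\<^sup>2 \<ge> 0"
    using lam by simp
  ultimately show ?thesis
    using sparse_cost_lower_bound[OF xj lam, of 0 N x X0 c] by simp
qed

lemma square_plus_abs_bounded_away_from_0:
  fixes k s d :: real
  assumes "k > 0" "s > 0" "d > 0"
  shows "\<exists>e>0. \<forall>a. e \<le> k * (s - a)\<^sup>2 + d * \<bar>a\<bar>"
proof (intro exI conjI allI)
  show "min (d * s / 2) (k * (s / 2)\<^sup>2) > 0"
    using assms by simp
  fix a
  show "min (d * s / 2) (k * (s / 2)\<^sup>2) \<le> k * (s - a)\<^sup>2 + d * \<bar>a\<bar>"
  proof (cases "\<bar>a\<bar> \<ge> s / 2")
    case True
    then have "d * s / 2 \<le> d * \<bar>a\<bar>"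
      using assms(3) by (simp add: mult_left_mono)
    moreover have "k * (s - a)\<^sup>2 \<ge> 0"
      using assms(1) by simp
    moreover have "min (d * s / 2) (k * (s / 2)\<^sup>2) \<le> d * s / 2"
      by simp
    ultimately show ?thesis
      by linarith
  next
    case False
    then have "(s / 2)\<^sup>2 \<le> (s - a)\<^sup>2"
      using assms(2) by (intro power_mono) auto
    then have "k * (s / 2)\<^sup>2 \<le> k * (s - a)\<^sup>2"
      using assms(1) by (simp add: mult_left_mono)
    moreover have "d * \<bar>a\<bar> \<ge> 0"
      using assms(3) by simp
    moreover have "min (d * s / 2) (k * (s / 2)\<^sup>2) \<le> k * (s / 2)\<^sup>2"
      by simp
    ultimately show ?thesis
      by linarith
  qed
qed

lemma sparse_cost_at_signed_atom:
  fixes x :: "nat \<Rightarrow> 'a::euclidean_space"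
  assumes xj: "norm xj = 1" and lam: "lam \<ge> 1"
    and k: "k < N" "x k \<in> X0" "x k = s *\<^sub>R xj" and s: "\<bar>s\<bar> = 1"
  shows "sparse_cost lam N x xj X0 (\<lambda>i. if i = k then s * (1 - 1 / lam) else 0) = 1 - 1 / (2 * lam)"
proof -
  define r where "r = 1 - 1 / lam"
  define c where "c = (\<lambda>i. if i = k then s * r else 0)"
  have r: "0 \<le> r" "1 - r = 1 / lam"
    using lam by (simp_all add: r_def)
  have "(\<Sum>i<N. \<bar>c i\<bar>) = (\<Sum>i\<in>{k}. \<bar>c i\<bar>)"
    by (rule sum.mono_neutral_right) (use k in \<open>auto simp: c_def\<close>)
  also have "\<dots> = r"
    using s r by (simp add: c_def abs_mult)
  finally have l1: "(\<Sum>i<N. \<bar>c i\<bar>) = r" .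
  have "atom_comb N x X0 c = (\<Sum>i\<in>{k}. c i *\<^sub>R x i)"
    unfolding atom_comb_def by (rule sum.mono_neutral_right) (use k in \<open>auto simp: c_def\<close>)
  also have "\<dots> = (r * (s * s)) *\<^sub>R xj"
    by (simp add: c_def k(3) ac_simps)
  also have "s * s = 1"
    using abs_mult_self_eq[of s] s by simp
  finally have "xj - atom_comb N x X0 c = (1 - r) *\<^sub>R xj"
    by (simp add: scaleR_diff_left)
  then have "norm (xj - atom_comb N x X0 c) = 1 - r"
    using xj r lam by simp
  with l1 have "sparse_cost lam N x xj X0 c = r + lam / 2 * (1 - r)\<^sup>2"
    unfolding sparse_cost_def by simp
  also have "\<dots> = 1 - 1 / (2 * lam)"
    using lam by (simp add: r_def power2_eq_square field_simps)
  finally show ?thesis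
    unfolding c_def r_def .
qed

lemma f_lam_ge:
  fixes x :: "nat \<Rightarrow> 'a::euclidean_space"
  assumes "\<forall>i<N. norm (x i) = 1" "norm xj = 1" "lam > 0"
  shows "f_lam lam N x xj X0 \<ge> 1 - 1 / (2 * lam)"
proof (cases "X0 = {}")
  case True
  have "(lam - 1)\<^sup>2 \<ge> 0" by simp
  then show ?thesis
    using True assms(3) by (simp add: f_lam_def field_simps power2_eq_square)
next
  case False
  then show ?thesis
    using sparse_cost_ge[OF assms] by (simp add: f_lam_eq_INF_sparse_cost cINF_greatest)
qed

lemma bdd_below_range_sparse_cost:
  fixes x :: "nat \<Rightarrow> 'a::euclidean_space"
  assumes "\<forall>i<N. norm (x i) = 1" "norm xj = 1" "lam > 0"
  shows "bdd_below (range (sparse_cost lam N x xj X0))"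
  using sparse_cost_ge[OF assms] by (intro bdd_belowI2) auto

lemma f_lam_le:
  fixes x :: "nat \<Rightarrow> 'a::euclidean_space"
  assumes "\<forall>i<N. norm (x i) = 1" "norm xj = 1" "lam > 0"
  shows "f_lam lam N x xj X0 \<le> lam / 2"
proof (cases "X0 = {}")
  case False
  have "(INF c. sparse_cost lam N x xj X0 c) \<le> sparse_cost lam N x xj X0 (\<lambda>_. 0)"
    by (rule cINF_lower[OF bdd_below_range_sparse_cost[OF assms]]) simp
  also have "\<dots> = lam / 2"
    using assms(2) by (simp add: sparse_cost_def atom_comb_def)
  finally show ?thesis
    using False by (simp add: f_lam_eq_INF_sparse_cost)
qed (simp add: f_lam_def)

lemma f_lam_eq_if_signed_atom:
  fixes x :: "nat \<Rightarrow> 'a::euclidean_space"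
  assumes unit: "\<forall>i<N. norm (x i) = 1" and xj: "norm xj = 1" and lam: "lam \<ge> 1"
    and X0: "X0 \<subseteq> x ` {..<N}" and signed: "xj \<in> X0 \<or> - xj \<in> X0"
  shows "f_lam lam N x xj X0 = 1 - 1 / (2 * lam)"
proof -
  have "\<exists>k s. k < N \<and> x k \<in> X0 \<and> x k = s *\<^sub>R xj \<and> \<bar>s\<bar> = 1"
  proof (cases "xj \<in> X0")
    case True
    then obtain k where "k < N" "x k = xj"
      using X0 by auto
    with True show ?thesis
      by (intro exI[of _ k] exI[of _ 1]) auto
  next
    case False
    then have "- xj \<in> X0"
      using signed by simp
    then obtain k where "k < N" "x k = - xj"
      using X0 by auto
    with \<open>- xj \<in> X0\<close> show ?thesis
      by (intro exI[of _ k] exI[of _ "- 1"]) auto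
  qed
  then obtain k s where k: "k < N" "x k \<in> X0" "x k = s *\<^sub>R xj" and s: "\<bar>s\<bar> = 1"
    by blast
  have "lam > 0"
    using lam by simp
  have "(INF c. sparse_cost lam N x xj X0 c)
          \<le> sparse_cost lam N x xj X0 (\<lambda>i. if i = k then s * (1 - 1 / lam) else 0)"
    by (rule cINF_lower[OF bdd_below_range_sparse_cost[OF unit xj \<open>lam > 0\<close>]]) simp
  also have "\<dots> = 1 - 1 / (2 * lam)"
    using xj lam k s by (rule sparse_cost_at_signed_atom)
  finally have "(INF c. sparse_cost lam N x xj X0 c) \<le> 1 - 1 / (2 * lam)" .
  moreover have "X0 \<noteq> {}"
    using k(2) by auto
  ultimately show ?thesis
    using f_lam_ge[OF unit xj \<open>lam > 0\<close>, of X0] by (simp add: f_lam_eq_INF_sparse_cost)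
qed

lemma inner_gap_if_no_signed_atom:
  fixes x :: "nat \<Rightarrow> 'a::euclidean_space"
  assumes unit: "\<forall>i<N. norm (x i) = 1" and xj: "norm xj = 1"
    and unsigned: "xj \<notin> X0" "- xj \<notin> X0"
  obtains d where "0 < d" "d \<le> 1" "\<forall>i<N. x i \<in> X0 \<longrightarrow> \<bar>x i \<bullet> xj\<bar> \<le> 1 - d"
proof -
  let ?I = "{i. i < N \<and> x i \<in> X0}"
  \<comment> \<open>inserting 1 keeps the set nonempty when no atom lies in \<open>X0\<close>\<close>
  define d where "d = Min (insert 1 ((\<lambda>i. 1 - \<bar>x i \<bullet> xj\<bar>) ` ?I))"
  have "\<bar>x i \<bullet> xj\<bar> < 1" if "i \<in> ?I" for i
  proof -
    have xi: "norm (x i) = 1" "x i \<noteq> xj" "x i \<noteq> - xj"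
      using that unit unsigned by auto
    then have "\<bar>x i \<bullet> xj\<bar> \<le> 1"
      using xj Cauchy_Schwarz_ineq2[of "x i" xj] by simp
    moreover have "\<bar>x i \<bullet> xj\<bar> \<noteq> 1"
      using xi xj unit_vectors_abs_inner_eq_1[of "x i" xj] by blast
    ultimately show ?thesis
      by simp
  qed
  then have "d > 0"
    unfolding d_def by (subst Min_gr_iff) auto
  moreover have "d \<le> 1"
    unfolding d_def by (rule Min_le) auto
  moreover have "\<forall>i<N. x i \<in> X0 \<longrightarrow> \<bar>x i \<bullet> xj\<bar> \<le> 1 - d"
  proof (intro allI impI)
    fix i
    assume "i < N" "x i \<in> X0"
    then have "d \<le> 1 - \<bar>x i \<bullet> xj\<bar>"
      unfolding d_def by (intro Min_le) auto
    then show "\<bar>x i \<bullet> xj\<bar> \<le> 1 - d"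
      by simp
  qed
  ultimately show ?thesis
    using that by blast
qed

lemma f_lam_gt_if_no_signed_atom:
  fixes x :: "nat \<Rightarrow> 'a::euclidean_space"
  assumes unit: "\<forall>i<N. norm (x i) = 1" and xj: "norm xj = 1" and lam: "lam > 1"
    and unsigned: "xj \<notin> X0" "- xj \<notin> X0"
  shows "f_lam lam N x xj X0 > 1 - 1 / (2 * lam)"
proof (cases "X0 = {}")
  case True
  have "(lam - 1)\<^sup>2 > 0"
    using lam by simp
  then show ?thesis
    using True lam by (simp add: f_lam_def field_simps power2_eq_square)
next
  case False
  obtain d where d: "0 < d" "d \<le> 1" and atoms: "\<forall>i<N. x i \<in> X0 \<longrightarrow> \<bar>x i \<bullet> xj\<bar> \<le> 1 - d"
    using inner_gap_if_no_signed_atom[OF unit xj unsigned] by blast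
  obtain e where "e > 0" and e: "\<And>a. e \<le> lam / 2 * (1 - 1 / lam - a)\<^sup>2 + d * \<bar>a\<bar>"
    using square_plus_abs_bounded_away_from_0[of "lam / 2" "1 - 1 / lam" d] lam d by auto
  have "sparse_cost lam N x xj X0 c \<ge> 1 - 1 / (2 * lam) + e" for c
    using sparse_cost_lower_bound[OF xj _ less_imp_le[OF d(1)] d(2) atoms, of lam c]
      e[of "atom_comb N x X0 c \<bullet> xj"] lam by linarith
  then have "(INF c. sparse_cost lam N x xj X0 c) \<ge> 1 - 1 / (2 * lam) + e"
    by (intro cINF_greatest) auto
  with \<open>e > 0\<close> False show ?thesis
    by (simp add: f_lam_eq_INF_sparse_cost)
qed

theorem lemma2:
  fixes N :: nat and x :: "nat \<Rightarrow> 'a::euclidean_space" and lam :: real and j :: nat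
  assumes unit: "\<forall>i<N. norm (x i) = 1"
    and lam: "lam > 1"
    and j: "j < N"
  shows "(\<forall>X0. X0 \<subseteq> x ` {..<N} \<longrightarrow>
            f_lam lam N x (x j) X0 \<in> {1 - 1 / (2 * lam) .. lam / 2})
       \<and> f_lam lam N x (x j) {} = lam / 2
       \<and> (\<forall>X0. X0 \<subseteq> x ` {..<N} \<longrightarrow>
            (f_lam lam N x (x j) X0 = 1 - 1 / (2 * lam) \<longleftrightarrow> x j \<in> X0 \<or> - x j \<in> X0))"
proof -
  have xj: "norm (x j) = 1"
    using unit j by simp
  have "f_lam lam N x (x j) X0 = 1 - 1 / (2 * lam) \<longleftrightarrow> x j \<in> X0 \<or> - x j \<in> X0"
    if X0: "X0 \<subseteq> x ` {..<N}" for X0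
  proof
    show "x j \<in> X0 \<or> - x j \<in> X0" if "f_lam lam N x (x j) X0 = 1 - 1 / (2 * lam)"
      using that f_lam_gt_if_no_signed_atom[OF unit xj lam, of X0] by auto
    show "f_lam lam N x (x j) X0 = 1 - 1 / (2 * lam)" if "x j \<in> X0 \<or> - x j \<in> X0"
      using f_lam_eq_if_signed_atom[OF unit xj _ X0 that] lam by simp
  qed
  moreover have "f_lam lam N x (x j) X0 \<in> {1 - 1 / (2 * lam) .. lam / 2}" for X0
    using f_lam_ge[OF unit xj] f_lam_le[OF unit xj] lam by simp
  ultimately show ?thesis
    by (simp add: f_lam_def)
qed

end
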